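(* Let $k$ be a field of characteristic $p > 0$, let $n \geq 3$, let $d_1 \ge d_2 \ge \dots \ge d_n \ge 2$ be integers, and let $A = k[x_1,\ldots,x_n]/(x_1^{d_1}, \ldots, x_n^{d_n})$. Write $d_i = N_i p + r_i$ with $N_i$ integers and $0<r_i\le p$. If one of the conditions below holds, then $A$ fails to have the strong Lefschetz property: (1) $p = 2$; (2) $p \geq 3$, $d_1 > p$, $d_2 \leq p$ and $\sum_{i=2}^n (d_i - 1) > r_1$; (3) $p \geq 3$, $d_1 > p$, $d_2 \leq p$ and $r_1 + \sum_{i=2}^n(d_i-1) > p$; (4) $p \geq 3$, $d_1 \leq p$ and $\sum_{i=1}^n(d_i-1) \geq p$; (5) $p \geq 3$ and $d_2 > p$.
   Context: $A$ is graded by degree, $A=\bigoplus_{i\ge0} A_i$. A linear map has maximal rank if it is injective or surjective. A graded artinian algebra $A$ has the strong Lefschetz property if there is a linear form $\ell\in A_1$ such that for all $i\ge 0$ and all $m\ge 1$ the map $A_i\to A_{i+m}$, $a\mapsto \ell^m a$, has maximal rank. *)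

theory Defs
  imports Main "HOL-Library.Poly_Mapping"
begin

text \<open>Polynomials in the variables x_1, x_2, ... over a field: monomials are
  exponent vectors (nat \<Rightarrow>0 nat), polynomials are finitely supported
  coefficient functions on monomials, with the convolution product.\<close>

type_synonym 'k mpoly = "(nat \<Rightarrow>\<^sub>0 nat) \<Rightarrow>\<^sub>0 'k"

text \<open>Standard monomials of A = k[x_1..x_n]/(x_1^d_1,...,x_n^d_n):
  only variables x_1..x_n occur, and the exponent of x_i is < d_i.
  They form a k-basis of A.\<close>
definition std_mon :: "nat \<Rightarrow> (nat \<Rightarrow> nat) \<Rightarrow> (nat \<Rightarrow>\<^sub>0 nat) \<Rightarrow> bool" where
  "std_mon n d a \<longleftrightarrow> Poly_Mapping.keys a \<subseteq> {1..n} \<and> (\<forall>i\<in>{1..n}. Poly_Mapping.lookup a i < d i)"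

definition mon_deg :: "nat \<Rightarrow> (nat \<Rightarrow>\<^sub>0 nat) \<Rightarrow> nat" where
  "mon_deg n a = (\<Sum>i\<in>{1..n}. Poly_Mapping.lookup a i)"

text \<open>Normal form modulo the monomial ideal (x_1^d_1,...,x_n^d_n):
  discard all non-standard monomials.\<close>
definition trunc :: "nat \<Rightarrow> (nat \<Rightarrow> nat) \<Rightarrow> 'k::comm_monoid_add mpoly \<Rightarrow> 'k mpoly" where
  "trunc n d f = (\<Sum>a\<in>{a\<in>Poly_Mapping.keys f. std_mon n d a}. Poly_Mapping.single a (Poly_Mapping.lookup f a))"

text \<open>The graded piece A_i, realised as the k-span of standard monomials of degree i.\<close>
definition A_deg :: "nat \<Rightarrow> (nat \<Rightarrow> nat) \<Rightarrow> nat \<Rightarrow> 'k::zero mpoly set" where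
  "A_deg n d i = {f. \<forall>a\<in>Poly_Mapping.keys f. std_mon n d a \<and> mon_deg n a = i}"

definition mult_map :: "nat \<Rightarrow> (nat \<Rightarrow> nat) \<Rightarrow> 'k::comm_ring_1 mpoly \<Rightarrow> nat \<Rightarrow> 'k mpoly \<Rightarrow> 'k mpoly" where
  "mult_map n d l m f = trunc n d (l ^ m * f)"

definition max_rank :: "nat \<Rightarrow> (nat \<Rightarrow> nat) \<Rightarrow> 'k::comm_ring_1 mpoly \<Rightarrow> nat \<Rightarrow> nat \<Rightarrow> bool" where
  "max_rank n d l i m \<longleftrightarrow>
     inj_on (mult_map n d l m) (A_deg n d i) \<or>
     mult_map n d l m ` A_deg n d i = A_deg n d (i + m)"

definition has_SLP :: "'k::field itself \<Rightarrow> nat \<Rightarrow> (nat \<Rightarrow> nat) \<Rightarrow> bool" where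
  "has_SLP TYPE('k) n d \<longleftrightarrow>
     (\<exists>l::'k mpoly. l \<in> A_deg n d 1 \<and> (\<forall>i m. m \<ge> 1 \<longrightarrow> max_rank n d l i m))"

end

theory Submission
  imports Defs "HOL-Computational_Algebra.Primes"
begin

text \<open>
  Let P = p^k and let l be any linear form. In characteristic p the Frobenius identity makes
  l^P a combination of P-th powers of monomials, so every monomial of l^(P q) has all
  exponents divisible by P. Multiplication by l^(P q) therefore kills a standard monomial x^e as
  soon as x^e x^(P b) vanishes in A for every monomial x^b of degree q, and misses a standard
  monomial x^\<beta> as soon as the sum of the \<lfloor>\<beta>_j / P\<rfloor> is less than q; then it has
  neither maximal rank option. Choosing the exponents of e and \<beta> variable by variable from
  d_j = N_j P + r_j, both witnesses exist as soon as the slacks of the d_j add up to at least P.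
  Each of the five conditions gives this, with P = p, or for p = 2 with P the power of 2 such that
  P/2 < d_2 \<le> P.
\<close>

lemma CHAR_poly_mapping [simp]: "CHAR('a::monoid_add \<Rightarrow>\<^sub>0 'b::semiring_1) = CHAR('b)"
proof (rule CHAR_eqI)
  show "(of_nat CHAR('b) :: 'a \<Rightarrow>\<^sub>0 'b) = 0"
    by (simp flip: single_of_nat)
next
  fix x assume "(of_nat x :: 'a \<Rightarrow>\<^sub>0 'b) = 0"
  then have "Poly_Mapping.lookup (of_nat x :: 'a \<Rightarrow>\<^sub>0 'b) 0 = 0" by simp
  then show "CHAR('b) dvd x" by (simp add: lookup_of_nat of_nat_eq_0_iff_char_dvd)
qed

lemma poly_mapping_sum_single:
  "(\<Sum>a\<in>Poly_Mapping.keys f. Poly_Mapping.single a (Poly_Mapping.lookup f a)) = f"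
  by (rule poly_mapping_eqI) (simp add: lookup_sum lookup_single when_def in_keys_iff)

lemma single_power:
  "Poly_Mapping.single k c ^ m = Poly_Mapping.single (\<Sum>_<m. k) (c ^ m)"
  by (induction m) (simp_all add: mult_single add.commute)

definition power_mon :: "nat \<Rightarrow> nat \<Rightarrow> nat \<Rightarrow> (nat \<Rightarrow>\<^sub>0 nat) \<Rightarrow> bool" where
  "power_mon n P t b \<longleftrightarrow> (\<forall>j. P dvd Poly_Mapping.lookup b j) \<and> mon_deg n b = P * t"

lemma power_mon_add:
  "power_mon n P s u \<Longrightarrow> power_mon n P t v \<Longrightarrow> power_mon n P (s + t) (u + v)"
  unfolding power_mon_def mon_deg_def by (auto simp: lookup_add sum.distrib algebra_simps)

lemma keys_power_power_mon:
  assumes "\<forall>b\<in>Poly_Mapping.keys (x::'k::comm_semiring_1 mpoly). power_mon n P 1 b"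
  shows "\<forall>b\<in>Poly_Mapping.keys (x ^ q). power_mon n P q b"
proof (induction q)
  case 0 then show ?case by (simp add: power_mon_def mon_deg_def)
next
  case (Suc q)
  show ?case
  proof
    fix b assume "b \<in> Poly_Mapping.keys (x ^ Suc q)"
    then have "b \<in> Poly_Mapping.keys (x * x ^ q)" by simp
    then obtain u v where "u \<in> Poly_Mapping.keys x" "v \<in> Poly_Mapping.keys (x ^ q)" "b = u + v"
      using keys_mult[of x "x ^ q"] by blast
    then show "power_mon n P (Suc q) b"
      using assms Suc.IH power_mon_add[of n P 1 u q v] by simp
  qed
qed

lemma sum_div_power_mon:
  assumes "power_mon n P q u" and "0 < P"
  shows "(\<Sum>j\<in>{1..n}. Poly_Mapping.lookup u j div P) = q"
proof -
  have "P * (\<Sum>j\<in>{1..n}. Poly_Mapping.lookup u j div P) = (\<Sum>j\<in>{1..n}. P * (Poly_Mapping.lookup u j div P))"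
    by (rule sum_distrib_left)
  also have "\<dots> = (\<Sum>j\<in>{1..n}. Poly_Mapping.lookup u j)"
    using assms(1) by (simp add: power_mon_def)
  also have "\<dots> = P * q" using assms(1) by (simp add: power_mon_def mon_deg_def)
  finally show ?thesis using assms(2) by simp
qed

lemma keys_linear_form_power:
  fixes l :: "'k::comm_semiring_1 mpoly"
  assumes char: "prime CHAR('k)" and lin: "\<forall>a\<in>Poly_Mapping.keys l. mon_deg n a = 1"
  shows "\<forall>b\<in>Poly_Mapping.keys (l ^ (CHAR('k) ^ k * q)). power_mon n (CHAR('k) ^ k) q b"
proof -
  let ?P = "CHAR('k) ^ k"
  have "l ^ ?P = (\<Sum>a\<in>Poly_Mapping.keys l. Poly_Mapping.single a (Poly_Mapping.lookup l a)) ^ ?P"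
    by (simp only: poly_mapping_sum_single)
  also have "\<dots> = (\<Sum>a\<in>Poly_Mapping.keys l. Poly_Mapping.single a (Poly_Mapping.lookup l a) ^ ?P)"
    by (rule freshmans_dream_sum') (simp_all add: char)
  also have "\<dots> = (\<Sum>a\<in>Poly_Mapping.keys l. Poly_Mapping.single (\<Sum>_<?P. a) (Poly_Mapping.lookup l a ^ ?P))"
    by (simp only: single_power)
  finally have "Poly_Mapping.keys (l ^ ?P) \<subseteq>
      (\<Union>a\<in>Poly_Mapping.keys l. Poly_Mapping.keys (Poly_Mapping.single (\<Sum>_<?P. a) (Poly_Mapping.lookup l a ^ ?P)))"
    by (simp only: keys_sum)
  then have "Poly_Mapping.keys (l ^ ?P) \<subseteq> (\<lambda>a. \<Sum>_<?P. a) ` Poly_Mapping.keys l"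
    by (auto split: if_splits)
  moreover have "power_mon n ?P 1 (\<Sum>_<?P. a)" if "a \<in> Poly_Mapping.keys l" for a
  proof -
    have "Poly_Mapping.lookup (\<Sum>_<?P. a) j = ?P * Poly_Mapping.lookup a j" for j
      by (simp only: lookup_sum) simp
    then show ?thesis
      using lin that unfolding power_mon_def mon_deg_def by (simp flip: sum_distrib_left)
  qed
  ultimately have "\<forall>b\<in>Poly_Mapping.keys (l ^ ?P). power_mon n ?P 1 b" by blast
  then show ?thesis by (simp add: power_mult keys_power_power_mon)
qed

lemma lookup_trunc:
  "Poly_Mapping.lookup (trunc n d f) b = (if std_mon n d b then Poly_Mapping.lookup f b else 0)"
  unfolding trunc_def lookup_sum by (simp add: lookup_single when_def in_keys_iff)

lemma mult_map_single_eq_0: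
  assumes "\<forall>u\<in>Poly_Mapping.keys (l ^ m). \<not> std_mon n d (u + e)"
  shows "mult_map n d l m (Poly_Mapping.single e 1) = 0"
proof (rule poly_mapping_eqI)
  fix b
  have "Poly_Mapping.lookup (l ^ m * Poly_Mapping.single e 1) b = 0" if "std_mon n d b"
  proof (rule ccontr)
    assume "Poly_Mapping.lookup (l ^ m * Poly_Mapping.single e 1) b \<noteq> 0"
    then obtain u where "u \<in> Poly_Mapping.keys (l ^ m)" "b = u + e"
      using keys_mult[of "l ^ m" "Poly_Mapping.single e 1"] by (auto simp: in_keys_iff)
    then show False using assms that by blast
  qed
  then show "Poly_Mapping.lookup (mult_map n d l m (Poly_Mapping.single e 1)) b = Poly_Mapping.lookup 0 b"
    by (simp add: mult_map_def lookup_trunc)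
qed

lemma mult_map_not_inj:
  fixes l :: "'k::comm_ring_1 mpoly"
  assumes "std_mon n d e" and "\<forall>u\<in>Poly_Mapping.keys (l ^ m). \<not> std_mon n d (u + e)"
  shows "\<not> inj_on (mult_map n d l m) (A_deg n d (mon_deg n e))"
proof
  assume inj: "inj_on (mult_map n d l m) (A_deg n d (mon_deg n e))"
  have "Poly_Mapping.single e (1::'k) \<in> A_deg n d (mon_deg n e)" "0 \<in> A_deg n d (mon_deg n e)"
    using assms(1) by (simp_all add: A_deg_def)
  moreover have "mult_map n d l m 0 = 0"
    by (rule poly_mapping_eqI) (simp add: mult_map_def lookup_trunc)
  ultimately have "Poly_Mapping.single e (1::'k) = 0"
    using inj_onD[OF inj] mult_map_single_eq_0[OF assms(2)] by metis
  then show False by (metis lookup_single_eq lookup_zero zero_neq_one)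
qed

lemma single_notin_mult_map_image:
  fixes l :: "'k::comm_ring_1 mpoly"
  assumes "std_mon n d \<beta>" and "\<forall>u\<in>Poly_Mapping.keys (l ^ m). \<forall>v. \<beta> \<noteq> u + v"
  shows "Poly_Mapping.single \<beta> 1 \<notin> mult_map n d l m ` X"
proof
  assume "Poly_Mapping.single \<beta> 1 \<in> mult_map n d l m ` X"
  then obtain f where "Poly_Mapping.single \<beta> 1 = trunc n d (l ^ m * f)"
    unfolding mult_map_def by blast
  then have "Poly_Mapping.lookup (l ^ m * f) \<beta> = 1"
    using assms(1) by (metis lookup_single_eq lookup_trunc)
  then have "\<beta> \<in> Poly_Mapping.keys (l ^ m * f)" by (simp add: in_keys_iff)
  then show False using keys_mult[of "l ^ m" f] assms(2) by blast
qed

lemma not_SLP_if_witness_monomials: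
  assumes char: "prime CHAR('k::field)" and P: "P = CHAR('k) ^ k" and q: "1 \<le> q"
    and e: "std_mon n d e" and \<beta>: "std_mon n d \<beta>" and deg: "mon_deg n \<beta> = mon_deg n e + P * q"
    and kernel: "\<forall>b. power_mon n P q b \<longrightarrow> \<not> std_mon n d (b + e)"
    and cokernel: "(\<Sum>j\<in>{1..n}. Poly_Mapping.lookup \<beta> j div P) < q"
  shows "\<not> has_SLP TYPE('k) n d"
proof
  assume "has_SLP TYPE('k) n d"
  then obtain l :: "'k mpoly" where l: "l \<in> A_deg n d 1" and rk: "\<And>i m. 1 \<le> m \<Longrightarrow> max_rank n d l i m"
    unfolding has_SLP_def by blast
  have "0 < P" using P char prime_gt_0_nat by simp
  have keys: "\<forall>u\<in>Poly_Mapping.keys (l ^ (P * q)). power_mon n P q u"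
    using keys_linear_form_power[OF char, of l n k q] l P by (simp add: A_deg_def)
  have "\<not> inj_on (mult_map n d l (P * q)) (A_deg n d (mon_deg n e))"
    using mult_map_not_inj[OF e] keys kernel by blast
  moreover have "\<beta> \<noteq> u + v" if "u \<in> Poly_Mapping.keys (l ^ (P * q))" for u v
  proof
    assume "\<beta> = u + v"
    then have "(\<Sum>j\<in>{1..n}. Poly_Mapping.lookup u j div P) \<le> (\<Sum>j\<in>{1..n}. Poly_Mapping.lookup \<beta> j div P)"
      by (intro sum_mono div_le_mono) (simp add: lookup_add)
    then show False using sum_div_power_mon keys that \<open>0 < P\<close> cokernel by fastforce
  qed
  then have "mult_map n d l (P * q) ` A_deg n d (mon_deg n e) \<noteq> A_deg n d (mon_deg n e + P * q)"
    using single_notin_mult_map_image[OF \<beta>] \<beta> deg by (force simp: A_deg_def)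
  moreover have "1 \<le> P * q" using \<open>0 < P\<close> q by simp
  ultimately show False using rk unfolding max_rank_def by blast
qed

definition mon_of :: "nat \<Rightarrow> (nat \<Rightarrow> nat) \<Rightarrow> (nat \<Rightarrow>\<^sub>0 nat)" where
  "mon_of n f = (\<Sum>j\<in>{1..n}. Poly_Mapping.single j (f j))"

lemma lookup_mon_of: "Poly_Mapping.lookup (mon_of n f) j = (if j \<in> {1..n} then f j else 0)"
  unfolding mon_of_def lookup_sum by (auto simp: lookup_single when_def)

lemma std_mon_mon_of: "(\<And>j. j \<in> {1..n} \<Longrightarrow> f j < d j) \<Longrightarrow> std_mon n d (mon_of n f)"
  unfolding std_mon_def by (auto simp: lookup_mon_of in_keys_iff split: if_splits)

lemma mon_deg_mon_of: "mon_deg n (mon_of n f) = (\<Sum>j\<in>{1..n}. f j)"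
  unfolding mon_deg_def by (simp add: lookup_mon_of)

lemma exists_le_with_sum:
  fixes b :: "'a \<Rightarrow> nat"
  assumes "finite A" and "T \<le> sum b A"
  shows "\<exists>c. (\<forall>j. c j \<le> b j) \<and> sum c A = T"
  using assms
proof (induction A arbitrary: T rule: finite_induct)
  case empty
  then show ?case by (intro exI[of _ "\<lambda>_. 0"]) simp
next
  case (insert a A)
  show ?case
  proof (cases "T \<le> sum b A")
    case True
    then obtain c where "\<forall>j. c j \<le> b j" "sum c A = T" using insert.IH by blast
    moreover have "sum (c(a := 0)) A = sum c A" using insert.hyps(2) by (intro sum.cong) auto
    ultimately show ?thesis using insert.hyps by (intro exI[of _ "c(a := 0)"]) simp
  next
    case False
    have "sum (b(a := T - sum b A)) A = sum b A" using insert.hyps(2) by (intro sum.cong) auto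
    then show ?thesis using False insert.hyps insert.prems
      by (intro exI[of _ "b(a := T - sum b A)"]) auto
  qed
qed

text \<open>Write x = N P + r with 0 < r \<le> P, so r = (x - 1) mod P + 1. The slack is h - e - P (h div P)
  for the exponents e, h < x chosen in obtain_slack_exponents: e = r and h = N P - 1 when N \<ge> 1
  and 2 r < P, and e = 0, h = x - 1 otherwise.\<close>
definition slack :: "nat \<Rightarrow> nat \<Rightarrow> nat" where
  "slack P x = (let r = (x - 1) mod P + 1 in if P < x then max (r - 1) (P - 1 - r) else r - 1)"

lemma obtain_slack_exponents:
  assumes P: "0 < P"
  obtains e h c :: "nat \<Rightarrow> nat" where
    "\<And>x. 1 \<le> x \<Longrightarrow> e x < x \<and> h x < x \<and> h x div P = c x \<and> h x = e x + P * c x + slack P x"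
    "\<And>x t. P * t + e x < x \<Longrightarrow> t \<le> c x"
proof -
  define N where "N x = (x - 1) div P" for x
  define r where "r x = (x - 1) mod P + 1" for x
  define B where "B x \<longleftrightarrow> P < x \<and> 2 * r x < P" for x
  define e where "e x = (if B x then r x else 0)" for x
  define c where "c x = (if B x then N x - 1 else N x)" for x
  define h where "h x = (if B x then N x * P - 1 else x - 1)" for x
  have x_eq: "x - 1 = N x * P + (r x - 1)" for x
    unfolding N_def r_def by simp
  have r: "1 \<le> r x" "r x \<le> P" for x
    using P unfolding r_def by (simp_all add: Suc_le_eq)
  have N_pos: "1 \<le> N x" if "P < x" for x
    using that P unfolding N_def by (simp add: div_greater_zero_iff Suc_le_eq)
  show thesis
  proof (rule that)
    fix x :: nat assume "1 \<le> x"
    show "e x < x \<and> h x < x \<and> h x div P = c x \<and> h x = e x + P * c x + slack P x"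
    proof (cases "B x")
      case True
      then have "P < x" "2 * r x < P" unfolding B_def by auto
      then obtain M where M: "N x = Suc M" using N_pos[of x] not0_implies_Suc by fastforce
      have x: "x = M * P + P + r x" using x_eq[of x] \<open>1 \<le> x\<close> r[of x] M by simp
      have h: "h x = M * P + (P - 1)" using True M P by (simp add: h_def)
      have "slack P x = P - 1 - r x"
        using \<open>P < x\<close> \<open>2 * r x < P\<close> unfolding slack_def r_def Let_def by auto
      moreover have "h x div P = M" using h P div_mult_self1[of P "P - 1" M] by (simp add: add.commute)
      ultimately show ?thesis
        using True M x h \<open>2 * r x < P\<close> by (simp add: e_def c_def mult.commute)
    next
      case False
      have "slack P x = r x - 1"
        using False unfolding slack_def r_def B_def Let_def by auto
      moreover have "(x - 1) div P = N x" unfolding N_def ..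
      ultimately show ?thesis
        using False x_eq[of x] r[of x] \<open>1 \<le> x\<close> by (auto simp: e_def c_def h_def algebra_simps)
    qed
  next
    fix x t assume t: "P * t + e x < x"
    then have x: "x = P * N x + r x" using x_eq[of x] r[of x] by (simp add: mult.commute)
    show "t \<le> c x"
    proof (cases "B x")
      case True
      then have "e x = r x" by (simp add: e_def)
      then have "P * t < P * N x" using t x by linarith
      then have "t < N x" by simp
      then show ?thesis using True by (simp add: c_def)
    next
      case False
      then have "e x = 0" by (simp add: e_def)
      then have "P * t < P * (N x + 1)" using t x r[of x] by (simp add: algebra_simps)
      then have "t < N x + 1" by (simp only: mult_less_cancel1)
      then show ?thesis using False by (simp add: c_def)
    qed
  qed
qed

lemma not_SLP_if_slack_sum_ge:
  assumes char: "prime CHAR('k::field)" and P: "P = CHAR('k) ^ k"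
    and d: "\<And>j. j \<in> {1..n} \<Longrightarrow> 1 \<le> d j"
    and slack: "P \<le> (\<Sum>j=1..n. slack P (d j))"
  shows "\<not> has_SLP TYPE('k) n d"
proof -
  have P0: "0 < P" using P char prime_gt_0_nat by simp
  obtain e h c where split:
      "\<And>x. 1 \<le> x \<Longrightarrow> e x < x \<and> h x < x \<and> h x div P = c x \<and> h x = e x + P * c x + slack P x"
    and cap: "\<And>x t. P * t + e x < x \<Longrightarrow> t \<le> c x"
    by (rule obtain_slack_exponents[OF P0]) (rule that)
  define q where "q = (\<Sum>j=1..n. c (d j)) + 1"
  have "(\<Sum>j=1..n. h (d j)) = (\<Sum>j=1..n. e (d j) + P * c (d j) + slack P (d j))"
    using split d by (intro sum.cong) auto
  then have "(\<Sum>j=1..n. e (d j)) + P * q \<le> (\<Sum>j=1..n. h (d j))"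
    using slack by (simp add: q_def sum.distrib sum_distrib_left)
  then obtain b where b: "\<forall>j. b j \<le> h (d j)" "(\<Sum>j=1..n. b j) = (\<Sum>j=1..n. e (d j)) + P * q"
    using exists_le_with_sum[where A = "{1..n}" and b = "\<lambda>j. h (d j)"] by auto
  show ?thesis
  proof (rule not_SLP_if_witness_monomials[OF char P])
    show "1 \<le> q" by (simp add: q_def)
    show "std_mon n d (mon_of n (\<lambda>j. e (d j)))"
      using split d by (intro std_mon_mon_of) blast
    show "std_mon n d (mon_of n b)"
      using split d b(1) by (intro std_mon_mon_of) (blast intro: le_less_trans)
    show "mon_deg n (mon_of n b) = mon_deg n (mon_of n (\<lambda>j. e (d j))) + P * q"
      using b(2) by (simp add: mon_deg_mon_of)
    show "\<forall>u. power_mon n P q u \<longrightarrow> \<not> std_mon n d (u + mon_of n (\<lambda>j. e (d j)))"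
    proof (intro allI impI notI)
      fix u assume u: "power_mon n P q u" and std: "std_mon n d (u + mon_of n (\<lambda>j. e (d j)))"
      have "Poly_Mapping.lookup u j div P \<le> c (d j)" if j: "j \<in> {1..n}" for j
      proof (rule cap)
        have "P * (Poly_Mapping.lookup u j div P) = Poly_Mapping.lookup u j"
          using u by (simp add: power_mon_def)
        moreover have "Poly_Mapping.lookup u j + e (d j) < d j"
          using std j by (simp add: std_mon_def lookup_add lookup_mon_of)
        ultimately show "P * (Poly_Mapping.lookup u j div P) + e (d j) < d j" by simp
      qed
      then have "(\<Sum>j=1..n. Poly_Mapping.lookup u j div P) \<le> (\<Sum>j=1..n. c (d j))"
        by (rule sum_mono)
      then have "q \<le> (\<Sum>j=1..n. c (d j))" by (simp only: sum_div_power_mon[OF u P0])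
      then show False by (simp add: q_def)
    qed
    have "(\<Sum>j=1..n. Poly_Mapping.lookup (mon_of n b) j div P) \<le> (\<Sum>j=1..n. c (d j))"
    proof (rule sum_mono)
      fix j assume j: "j \<in> {1..n}"
      have "b j div P \<le> h (d j) div P" using b(1) div_le_mono by blast
      also have "\<dots> = c (d j)" using split d[OF j] by blast
      finally show "Poly_Mapping.lookup (mon_of n b) j div P \<le> c (d j)"
        using j by (simp add: lookup_mon_of)
    qed
    then show "(\<Sum>j=1..n. Poly_Mapping.lookup (mon_of n b) j div P) < q" by (simp add: q_def)
  qed
qed

lemma slack_le: "0 < P \<Longrightarrow> 1 \<le> x \<Longrightarrow> x \<le> P \<Longrightarrow> slack P x = x - 1"
  unfolding slack_def Let_def by simp

lemma slack_gt:
  assumes "P < x"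
  shows "(x - 1) mod P \<le> slack P x" and "P \<le> slack P x + (x - 1) mod P + 2"
  using assms unfolding slack_def Let_def by auto

lemma slack_gt_odd:
  assumes "odd P" and "P < x"
  shows "P \<le> 2 * slack P x + 1"
proof -
  have "P \<le> 2 * slack P x + 2" using slack_gt[OF assms(2)] by linarith
  moreover have "even (2 * slack P x + 2)" by simp
  then have "P \<noteq> 2 * slack P x + 2" using assms(1) by metis
  ultimately show ?thesis by linarith
qed

lemma sum_slack_eq_if_le:
  "0 < P \<Longrightarrow> (\<And>j. j \<in> A \<Longrightarrow> 1 \<le> d j \<and> d j \<le> P) \<Longrightarrow> (\<Sum>j\<in>A. slack P (d j)) = (\<Sum>j\<in>A. d j - 1)"
  by (intro sum.cong) (simp_all add: slack_le)

lemma slack_sum_ge_of_first_three: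
  fixes d :: "nat \<Rightarrow> nat" and n :: nat
  assumes "3 \<le> n" and "P \<le> slack P (d 1) + slack P (d 2) + slack P (d 3)"
  shows "P \<le> (\<Sum>j=1..n. slack P (d j))"
proof -
  have "(\<Sum>j\<in>{1, 2, 3}. slack P (d j)) \<le> (\<Sum>j=1..n. slack P (d j))"
    using assms(1) by (intro sum_mono2) auto
  then show ?thesis using assms(2) by simp
qed

lemma slack_sum_ge_if_first_gt:
  fixes d :: "nat \<Rightarrow> nat" and n :: nat
  assumes "1 \<le> n" and "P < d 1" and small: "\<And>j. j \<in> {2..n} \<Longrightarrow> 1 \<le> d j \<and> d j \<le> P"
    and r: "int (d 1) = N * int P + int r" "0 < r" "r \<le> P"
    and big: "r < (\<Sum>j=2..n. d j - 1) \<or> P < r + (\<Sum>j=2..n. d j - 1)"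
  shows "P \<le> (\<Sum>j=1..n. slack P (d j))"
proof -
  have "0 < N * int P" using r \<open>P < d 1\<close> by linarith
  then have "0 < N" by (simp add: zero_less_mult_iff)
  then have "int (d 1) = int (nat N * P + r)" using r(1) by simp
  then have "d 1 - 1 = nat N * P + (r - 1)" using r(2) by (simp only: of_nat_eq_iff)
  then have "(d 1 - 1) mod P = (r - 1 + nat N * P) mod P" by (simp only: add.commute)
  also have "\<dots> = r - 1" using r(2,3) by (simp only: mod_mult_self1) simp
  finally have "(d 1 - 1) mod P = r - 1" .
  then have "r - 1 \<le> slack P (d 1)" "P \<le> slack P (d 1) + r + 1"
    using slack_gt[OF \<open>P < d 1\<close>] r by auto
  moreover have "(\<Sum>j=1..n. slack P (d j)) = slack P (d 1) + (\<Sum>j=2..n. slack P (d j))"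
    using \<open>1 \<le> n\<close> by (simp add: sum.atLeast_Suc_atMost numeral_2_eq_2)
  moreover have "(\<Sum>j=2..n. slack P (d j)) = (\<Sum>j=2..n. d j - 1)"
    using sum_slack_eq_if_le[of P "{2..n}" d] small r(2,3) by simp
  ultimately show ?thesis using big by linarith
qed

lemma slack_sum_ge_if_two_gt:
  fixes d :: "nat \<Rightarrow> nat" and n :: nat
  assumes "odd P" "3 \<le> P" "3 \<le> n" "P < d 1" "P < d 2" "2 \<le> d 3"
  shows "P \<le> (\<Sum>j=1..n. slack P (d j))"
proof (rule slack_sum_ge_of_first_three)
  have "1 \<le> slack P (d 3)"
  proof (cases "d 3 \<le> P")
    case True
    then show ?thesis using assms by (simp add: slack_le)
  next
    case False
    then show ?thesis using slack_gt_odd[OF \<open>odd P\<close>, of "d 3"] \<open>3 \<le> P\<close> by simp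
  qed
  then show "P \<le> slack P (d 1) + slack P (d 2) + slack P (d 3)"
    using slack_gt_odd[OF \<open>odd P\<close>, of "d 1"] slack_gt_odd[OF \<open>odd P\<close>, of "d 2"] assms
    by linarith
qed (use assms in simp)

lemma slack_sum_ge_if_second_ge_half:
  fixes d :: "nat \<Rightarrow> nat" and n :: nat
  assumes "3 \<le> n" "d 2 \<le> d 1" "2 \<le> d 3" "d 3 \<le> d 2" "d 2 \<le> P" "P \<le> 2 * (d 2 - 1)"
  shows "P \<le> (\<Sum>j=1..n. slack P (d j))"
proof (rule slack_sum_ge_of_first_three)
  have "slack P (d 2) = d 2 - 1" "slack P (d 3) = d 3 - 1"
    using assms by (simp_all add: slack_le)
  moreover have "d 2 - 1 \<le> slack P (d 1) + 1 \<or> P \<le> 2 * slack P (d 1) + 2"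
  proof (cases "d 1 \<le> P")
    case True
    then have "slack P (d 1) = d 1 - 1" using assms by (simp add: slack_le)
    then show ?thesis using assms by linarith
  next
    case False
    then show ?thesis using slack_gt[of P "d 1"] by linarith
  qed
  ultimately show "P \<le> slack P (d 1) + slack P (d 2) + slack P (d 3)"
    using assms by linarith
qed (use assms in simp)

lemma exists_power2_between: "2 \<le> (x::nat) \<Longrightarrow> \<exists>k. x \<le> 2 ^ k \<and> 2 ^ k \<le> 2 * (x - 1)"
proof (induction x rule: nat_induct_at_least)
  case base
  then show ?case by (intro exI[of _ 1]) simp
next
  case (Suc x)
  then obtain k where k: "x \<le> 2 ^ k" "2 ^ k \<le> 2 * (x - 1)" by blast
  show ?case
  proof (cases "Suc x \<le> 2 ^ k")
    case True
    then show ?thesis using k by (intro exI[of _ k]) simp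
  next
    case False
    then have "x = 2 ^ k" using k by linarith
    then show ?thesis using k by (intro exI[of _ "Suc k"]) simp
  qed
qed

theorem proposition3p5:
  fixes p n :: nat and d r :: "nat \<Rightarrow> nat" and N :: "nat \<Rightarrow> int"
  assumes char: "CHAR('k::field) = p" and p_pos: "p > 0"
    and n3: "n \<ge> 3"
    and d_mono: "\<And>i j. 1 \<le> i \<Longrightarrow> i \<le> j \<Longrightarrow> j \<le> n \<Longrightarrow> d j \<le> d i"
    and d_ge2: "\<And>i. 1 \<le> i \<Longrightarrow> i \<le> n \<Longrightarrow> d i \<ge> 2"
    and decomp: "\<And>i. 1 \<le> i \<Longrightarrow> i \<le> n \<Longrightarrow>
        int (d i) = N i * int p + int (r i) \<and> 0 < r i \<and> r i \<le> p"
    and cond: "p = 2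
      \<or> (p \<ge> 3 \<and> d 1 > p \<and> d 2 \<le> p \<and> (\<Sum>i=2..n. d i - 1) > r 1)
      \<or> (p \<ge> 3 \<and> d 1 > p \<and> d 2 \<le> p \<and> r 1 + (\<Sum>i=2..n. d i - 1) > p)
      \<or> (p \<ge> 3 \<and> d 1 \<le> p \<and> (\<Sum>i=1..n. d i - 1) \<ge> p)
      \<or> (p \<ge> 3 \<and> d 2 > p)"
  shows "\<not> has_SLP TYPE('k) n d"
proof -
  have char_prime: "prime CHAR('k)" using char p_pos prime_CHAR_semidom by blast
  have d_pos: "\<And>j. j \<in> {1..n} \<Longrightarrow> 1 \<le> d j" using d_ge2 by fastforce
  have d_tail: "\<And>j. j \<in> {2..n} \<Longrightarrow> 2 \<le> d j \<and> d j \<le> d 2" using d_ge2 d_mono by auto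
  have "\<exists>k. p ^ k \<le> (\<Sum>j=1..n. slack (p ^ k) (d j))"
    using cond
  proof (elim disjE conjE)
    assume "p = 2"
    obtain k where "d 2 \<le> 2 ^ k" "2 ^ k \<le> 2 * (d 2 - 1)"
      using exists_power2_between d_tail[of 2] n3 by auto
    then show ?thesis
      using slack_sum_ge_if_second_ge_half[of n d "2 ^ k"] \<open>p = 2\<close> n3 d_mono[of 1 2] d_tail[of 3] by auto
  next
    assume "3 \<le> p" "p < d 1" "d 2 \<le> p" "r 1 < (\<Sum>i=2..n. d i - 1)"
    then show ?thesis
      using slack_sum_ge_if_first_gt[of n p d] decomp[of 1] d_tail n3 by (intro exI[of _ 1]) force
  next
    assume "3 \<le> p" "p < d 1" "d 2 \<le> p" "p < r 1 + (\<Sum>i=2..n. d i - 1)"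
    then show ?thesis
      using slack_sum_ge_if_first_gt[of n p d] decomp[of 1] d_tail n3 by (intro exI[of _ 1]) force
  next
    assume "3 \<le> p" "d 1 \<le> p" "p \<le> (\<Sum>i=1..n. d i - 1)"
    then show ?thesis
      using sum_slack_eq_if_le[of p "{1..n}" d] d_pos d_mono[of 1] by (intro exI[of _ 1]) force
  next
    assume "3 \<le> p" "p < d 2"
    moreover have "odd p" using char_prime char \<open>3 \<le> p\<close> prime_odd_nat by force
    ultimately show ?thesis
      using slack_sum_ge_if_two_gt[of p n d] d_mono[of 1 2] d_ge2[of 3] n3 by (intro exI[of _ 1]) force
  qed
  then obtain k where "p ^ k \<le> (\<Sum>j=1..n. slack (p ^ k) (d j))" by blast
  then show ?thesis
    using not_SLP_if_slack_sum_ge[OF char_prime, of "p ^ k" k n d] char d_pos by simp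
qed

end
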